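(* Let $N\ge3$, let $f_1,\dots,f_{N-1}$ be independent variables and $\beta_1,\dots,\beta_{N-2}$ constants. For $m=1,\dots,N-2$ define $$F_m(\lambda)=\prod_{n=m}^{N-2}\Bigl(1+(\lambda+\beta_n)\frac{\partial^2}{\partial f_n\partial f_{n+1}}\Bigr)(f_m f_{m+1}\cdots f_{N-1}),$$ and $F_{N-1}(\lambda)=f_{N-1}$. Then for $m=1,\dots,N-3$, $$F_m(\lambda)=f_mF_{m+1}(\lambda)+(\lambda+\beta_m)F_{m+2}(\lambda),$$ and for $m=1,\dots,N-2$, $\dfrac{\partial F_m(\lambda)}{\partial f_m}=F_{m+1}(\lambda)$. *)

theory Defs
  imports Complex_Main "HOL-Library.Poly_Mapping"
begin

text \<open>Polynomials with real coefficients in the independent variables f_i (i :: nat),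
  represented as finitely supported maps from monomials (exponent vectors) to coefficients.\<close>

type_synonym rpoly = "(nat \<Rightarrow>\<^sub>0 nat) \<Rightarrow>\<^sub>0 real"

definition pvar :: "nat \<Rightarrow> rpoly" where
  "pvar i = Poly_Mapping.single (Poly_Mapping.single i 1) 1"

definition pconst :: "real \<Rightarrow> rpoly" where
  "pconst c = Poly_Mapping.single 0 c"

definition pderiv_var :: "nat \<Rightarrow> rpoly \<Rightarrow> rpoly" where
  "pderiv_var i p =
     (\<Sum>(mon :: nat \<Rightarrow>\<^sub>0 nat)\<in>Poly_Mapping.keys p. if 0 < Poly_Mapping.lookup mon i
        then Poly_Mapping.single (mon - Poly_Mapping.single i 1)
               (of_nat (Poly_Mapping.lookup mon i) * Poly_Mapping.lookup p mon)
        else 0)"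

definition Dop :: "(nat \<Rightarrow> real) \<Rightarrow> real \<Rightarrow> nat \<Rightarrow> rpoly \<Rightarrow> rpoly" where
  "Dop \<beta> lam n p = p + pconst (lam + \<beta> n) * pderiv_var n (pderiv_var (n + 1) p)"

text \<open>F_m(lambda) = prod_{n=m}^{N-2} Dop_n (f_m ... f_{N-1}) for m \<le> N-2, F_{N-1} = f_{N-1}.
  The (commuting) operators are composed as Dop_m o ... o Dop_(N-2).\<close>
definition Fpoly :: "nat \<Rightarrow> (nat \<Rightarrow> real) \<Rightarrow> real \<Rightarrow> nat \<Rightarrow> rpoly" where
  "Fpoly N \<beta> lam m =
     (if m = N - 1 then pvar (N - 1)
      else foldr (Dop \<beta> lam) [m..<N - 1] (\<Prod>i\<in>{m..N - 1}. pvar i))"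

end

theory Submission
  imports Defs
begin

text \<open>For n > m the operator \<open>Dop \<beta> lam n\<close> only differentiates in f_n and f_(n+1), so the factor f_m
  can be pulled out of all operators but the first: \<open>F_m = Dop_m (f_m F_(m+1))\<close>. Since F_(m+1) does
  not involve f_m, expanding \<open>Dop_m\<close> gives \<open>F_m = f_m F_(m+1) + (lam + \<beta>_m) \<partial>F_(m+1)/\<partial>f_(m+1)\<close>, whose
  derivative in f_m is F_(m+1). Applied to m+1, the latter identity turns the former into the
  three-term recursion.\<close>

lemma eq_single_add_iff:
  fixes y q :: "nat \<Rightarrow>\<^sub>0 nat"
  shows "y = Poly_Mapping.single j 1 + q \<longleftrightarrow>
         0 < Poly_Mapping.lookup y j \<and> q = y - Poly_Mapping.single j 1"
  by (auto simp: poly_mapping_eq_iff fun_eq_iff lookup_add lookup_minus lookup_single when_def)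

lemma lookup_pvar_mult:
  "Poly_Mapping.lookup (pvar j * g) y =
     (if 0 < Poly_Mapping.lookup y j then Poly_Mapping.lookup g (y - Poly_Mapping.single j 1) else 0)"
proof -
  have "Poly_Mapping.lookup (pvar j * g) y =
        (\<Sum>q. Poly_Mapping.lookup g q when y = Poly_Mapping.single j 1 + q)"
    by (simp add: pvar_def lookup_mult lookup_single when_mult)
  then show ?thesis
    by (simp only: eq_single_add_iff) (cases "0 < Poly_Mapping.lookup y j"; simp)
qed

lemma lookup_pconst_mult: "Poly_Mapping.lookup (pconst c * g) y = c * Poly_Mapping.lookup g y"
  by (simp add: pconst_def lookup_mult lookup_single when_mult)

lemma lookup_pderiv_var:
  "Poly_Mapping.lookup (pderiv_var i p) x =
     of_nat (Poly_Mapping.lookup x i + 1) * Poly_Mapping.lookup p (x + Poly_Mapping.single i 1)"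
proof -
  let ?e = "Poly_Mapping.single i (1::nat)"
  have "Poly_Mapping.lookup (pderiv_var i p) x =
        (\<Sum>mon\<in>Poly_Mapping.keys p.
           if mon = x + ?e then of_nat (Poly_Mapping.lookup mon i) * Poly_Mapping.lookup p mon else 0)"
    unfolding pderiv_var_def lookup_sum
  proof (rule sum.cong[OF refl])
    fix mon :: "nat \<Rightarrow>\<^sub>0 nat"
    have "0 < Poly_Mapping.lookup mon i \<Longrightarrow> mon - ?e = x \<longleftrightarrow> mon = x + ?e"
      using eq_single_add_iff[of mon i x] by (auto simp: add.commute)
    moreover have "mon = x + ?e \<Longrightarrow> 0 < Poly_Mapping.lookup mon i"
      by (simp add: lookup_add)
    ultimately show "Poly_Mapping.lookup (if 0 < Poly_Mapping.lookup mon i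
          then Poly_Mapping.single (mon - ?e) (of_nat (Poly_Mapping.lookup mon i) * Poly_Mapping.lookup p mon)
          else 0) x =
        (if mon = x + ?e then of_nat (Poly_Mapping.lookup mon i) * Poly_Mapping.lookup p mon else 0)"
      by (auto simp: lookup_single when_def)
  qed
  also have "\<dots> = of_nat (Poly_Mapping.lookup x i + 1) * Poly_Mapping.lookup p (x + ?e)"
    by (cases "x + ?e \<in> Poly_Mapping.keys p") (auto simp: sum.delta' lookup_add in_keys_iff)
  finally show ?thesis .
qed

lemma pderiv_var_add: "pderiv_var i (p + q) = pderiv_var i p + pderiv_var i q"
  by (simp add: poly_mapping_eq_iff fun_eq_iff lookup_pderiv_var lookup_add distrib_left)

lemma pderiv_var_pconst_mult: "pderiv_var i (pconst c * p) = pconst c * pderiv_var i p"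
  by (simp add: poly_mapping_eq_iff fun_eq_iff lookup_pderiv_var lookup_pconst_mult)

lemma pderiv_var_pvar_mult:
  "pderiv_var i (pvar j * g) = (if i = j then g else 0) + pvar j * pderiv_var i g"
proof (rule poly_mapping_eqI)
  fix x :: "nat \<Rightarrow>\<^sub>0 nat"
  let ?ei = "Poly_Mapping.single i (1::nat)" and ?ej = "Poly_Mapping.single j (1::nat)"
  have "x + ?ei - ?ej = x - ?ej + ?ei" if "i \<noteq> j"
    using that by (simp add: poly_mapping_eq_iff fun_eq_iff lookup_add lookup_minus lookup_single when_def)
  moreover have "x - ?ei + ?ei = x" if "0 < Poly_Mapping.lookup x i"
    using that by (simp add: poly_mapping_eq_iff fun_eq_iff lookup_add lookup_minus lookup_single when_def)
  ultimately show "Poly_Mapping.lookup (pderiv_var i (pvar j * g)) x =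
      Poly_Mapping.lookup ((if i = j then g else 0) + pvar j * pderiv_var i g) x"
    by (cases "i = j"; cases "0 < Poly_Mapping.lookup x i")
      (simp_all add: lookup_pderiv_var lookup_pvar_mult lookup_add lookup_minus lookup_single
        distrib_right)
qed

definition var_free :: "nat \<Rightarrow> rpoly \<Rightarrow> bool" where
  "var_free i p \<longleftrightarrow> (\<forall>mon. 0 < Poly_Mapping.lookup mon i \<longrightarrow> Poly_Mapping.lookup p mon = 0)"

lemma pderiv_var_eq_0_if_var_free: "var_free i p \<Longrightarrow> pderiv_var i p = 0"
  by (simp add: var_free_def poly_mapping_eq_iff fun_eq_iff lookup_pderiv_var lookup_add)

lemma var_free_pderiv_var: "var_free i p \<Longrightarrow> var_free i (pderiv_var j p)"
  by (simp add: var_free_def lookup_pderiv_var lookup_add)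

lemma var_free_Dop: "var_free i p \<Longrightarrow> var_free i (Dop \<beta> lam n p)"
  by (simp add: Dop_def var_free_def lookup_add lookup_pconst_mult lookup_pderiv_var)

lemma var_free_foldr_Dop: "var_free i p \<Longrightarrow> var_free i (foldr (Dop \<beta> lam) ns p)"
  by (induction ns) (simp_all add: var_free_Dop)

lemma var_free_prod_pvar: "i \<notin> S \<Longrightarrow> var_free i (\<Prod>j\<in>S. pvar j)"
proof (induction S rule: infinite_finite_induct)
  case (insert j S)
  then show ?case
    by (auto simp: var_free_def lookup_pvar_mult lookup_minus lookup_single when_def)
qed (simp_all add: var_free_def lookup_one when_def)

lemma Dop_pvar_mult_commute:
  assumes "j \<noteq> n" "j \<noteq> n + 1"
  shows "Dop \<beta> lam n (pvar j * g) = pvar j * Dop \<beta> lam n g"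
  using assms by (simp add: Dop_def pderiv_var_pvar_mult distrib_left mult.left_commute)

lemma foldr_Dop_pvar_mult_commute:
  "(\<And>n. n \<in> set ns \<Longrightarrow> j \<noteq> n \<and> j \<noteq> n + 1) \<Longrightarrow>
     foldr (Dop \<beta> lam) ns (pvar j * g) = pvar j * foldr (Dop \<beta> lam) ns g"
  by (induction ns) (simp_all add: Dop_pvar_mult_commute)

text \<open>The case m = N - 1 of the definition is the empty composition of operators.\<close>

lemma Fpoly_eq_foldr:
  "Fpoly N \<beta> lam m = foldr (Dop \<beta> lam) [m..<N - 1] (\<Prod>i\<in>{m..N - 1}. pvar i)"
  by (simp add: Fpoly_def)

lemma var_free_Fpoly: "i < m \<Longrightarrow> var_free i (Fpoly N \<beta> lam m)"
  by (simp add: Fpoly_eq_foldr var_free_foldr_Dop var_free_prod_pvar)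

lemma Fpoly_eq_Dop:
  assumes "m + 1 < N"
  shows "Fpoly N \<beta> lam m = Dop \<beta> lam m (pvar m * Fpoly N \<beta> lam (m + 1))"
proof -
  have "[m..<N - 1] = m # [m + 1..<N - 1]"
    using assms by (simp add: upt_conv_Cons)
  moreover have "(\<Prod>i\<in>{m..N - 1}. pvar i) = pvar m * (\<Prod>i\<in>{m + 1..N - 1}. pvar i)"
    using assms by (subst prod.atLeast_Suc_atMost) auto
  moreover have "foldr (Dop \<beta> lam) [m + 1..<N - 1] (pvar m * (\<Prod>i\<in>{m + 1..N - 1}. pvar i))
      = pvar m * Fpoly N \<beta> lam (m + 1)"
    by (subst foldr_Dop_pvar_mult_commute) (auto simp: Fpoly_eq_foldr)
  ultimately show ?thesis
    by (simp add: Fpoly_eq_foldr)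
qed

lemma Fpoly_expand:
  assumes "m + 1 < N"
  shows "Fpoly N \<beta> lam m = pvar m * Fpoly N \<beta> lam (m + 1)
           + pconst (lam + \<beta> m) * pderiv_var (m + 1) (Fpoly N \<beta> lam (m + 1))"
proof -
  let ?G = "Fpoly N \<beta> lam (m + 1)"
  have "var_free m (pderiv_var (m + 1) ?G)"
    by (simp add: var_free_Fpoly var_free_pderiv_var)
  then have "pderiv_var m (pderiv_var (m + 1) (pvar m * ?G)) = pderiv_var (m + 1) ?G"
    by (simp add: pderiv_var_pvar_mult pderiv_var_eq_0_if_var_free)
  then show ?thesis
    using assms by (simp add: Fpoly_eq_Dop Dop_def)
qed

lemma pderiv_var_Fpoly:
  assumes "m + 1 < N"
  shows "pderiv_var m (Fpoly N \<beta> lam m) = Fpoly N \<beta> lam (m + 1)"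
proof -
  let ?G = "Fpoly N \<beta> lam (m + 1)"
  have "var_free m ?G" "var_free m (pderiv_var (m + 1) ?G)"
    by (simp_all add: var_free_Fpoly var_free_pderiv_var)
  then show ?thesis
    by (simp add: Fpoly_expand[OF assms] pderiv_var_add pderiv_var_pconst_mult pderiv_var_pvar_mult
        pderiv_var_eq_0_if_var_free)
qed

theorem mainTheorem5:
  fixes N :: nat and \<beta> :: "nat \<Rightarrow> real" and lam :: real
  assumes "N \<ge> 3"
  shows "(\<forall>m. 1 \<le> m \<and> m \<le> N - 3 \<longrightarrow>
            Fpoly N \<beta> lam m = pvar m * Fpoly N \<beta> lam (m + 1)
                            + pconst (lam + \<beta> m) * Fpoly N \<beta> lam (m + 2))
       \<and> (\<forall>m. 1 \<le> m \<and> m \<le> N - 2 \<longrightarrow>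
            pderiv_var m (Fpoly N \<beta> lam m) = Fpoly N \<beta> lam (m + 1))"
proof (intro conjI allI impI)
  fix m assume "1 \<le> m \<and> m \<le> N - 3"
  then have "m + 1 < N" "m + 1 + 1 < N"
    using assms by auto
  then show "Fpoly N \<beta> lam m = pvar m * Fpoly N \<beta> lam (m + 1)
               + pconst (lam + \<beta> m) * Fpoly N \<beta> lam (m + 2)"
    using Fpoly_expand pderiv_var_Fpoly by (simp add: add.assoc)
next
  fix m assume "1 \<le> m \<and> m \<le> N - 2"
  then show "pderiv_var m (Fpoly N \<beta> lam m) = Fpoly N \<beta> lam (m + 1)"
    using assms by (intro pderiv_var_Fpoly) auto
qed

end
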